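(* For every positive integer $k$ there exist $d_k > 0$ and $n_0$ such that for every $n\ge n_0$ the following holds. If $G$ is a $k$-partite $k$-graph with vertex classes $V_1, \dots, V_k$ each of $n$ vertices in which every vertex lies in at least $(1-d_k)n^{k-1}$ edges of $G$, then $G$ contains a perfect matching.
   Context: A $k$-partite $k$-graph with vertex classes $V_1,\dots,V_k$ is a set of $k$-element subsets (edges) of $V_1\cup\dots\cup V_k$ each containing exactly one vertex of each $V_i$. A perfect matching is a set of pairwise disjoint edges covering every vertex. *)

theory Defs
  imports Complex_Main
begin

definition kpartite_kgraph :: "nat \<Rightarrow> (nat \<Rightarrow> 'a set) \<Rightarrow> 'a set set \<Rightarrow> bool" where
  "kpartite_kgraph k V E \<longleftrightarrow>
     (\<forall>i<k. \<forall>j<k. i \<noteq> j \<longrightarrow> V i \<inter> V j = {}) \<and>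
     (\<forall>e\<in>E. e \<subseteq> (\<Union>i<k. V i) \<and> (\<forall>i<k. card (e \<inter> V i) = 1))"

definition vdeg :: "'a set set \<Rightarrow> 'a \<Rightarrow> nat" where
  "vdeg E v = card {e \<in> E. v \<in> e}"

definition perfect_matching :: "'a set \<Rightarrow> 'a set set \<Rightarrow> 'a set set \<Rightarrow> bool" where
  "perfect_matching Vs E M \<longleftrightarrow>
     M \<subseteq> E \<and> (\<forall>e\<in>M. \<forall>f\<in>M. e \<noteq> f \<longrightarrow> e \<inter> f = {}) \<and> \<Union>M = Vs"

end

theory Submission
  imports Defs "HOL-Library.FuncSet" "HOL-Library.Disjoint_Sets"
begin

text \<open>Take a maximum matching \<open>M\<close> and suppose it is not perfect; since every class meets
  \<open>\<Union>M\<close> in \<open>|M|\<close> vertices, each class \<open>V c\<close> then contains an uncovered vertex \<open>u c\<close>.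

  If \<open>|M|\<close> is small, fewer than \<open>(1 - d) n ^ (k - 1)\<close> transversals through \<open>u 0\<close> meet
  \<open>\<Union>M\<close>, so some edge at \<open>u 0\<close> is disjoint from \<open>M\<close> and can be added.

  If \<open>|M| \<ge> n / (2k)\<close>, pick distinct edges \<open>x\<^sub>1, \<dots>, x\<^sub>k\<^sub>-\<^sub>1\<close> of \<open>M\<close> and write
  \<open>u, x\<^sub>1, \<dots>, x\<^sub>k\<^sub>-\<^sub>1\<close> as the rows of a \<open>k \<times> k\<close> array whose column \<open>c\<close> lies in \<open>V c\<close>.
  Its \<open>k\<close> broken diagonals are disjoint transversals; the \<open>j\<close>-th one takes its vertex in
  \<open>V c\<close> from row \<open>(c - j) mod k\<close>, so it passes through \<open>u j\<close>. For fixed \<open>j\<close> different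
  choices give different diagonals, so at most \<open>d n ^ (k - 1)\<close> choices make
  the \<open>j\<close>-th diagonal a non-edge. Since the number of choices, a falling factorial of \<open>|M|\<close>,
  exceeds \<open>k d n ^ (k - 1)\<close> for \<open>d = (4k) ^ -k\<close> and \<open>n \<ge> 4k\<^sup>2\<close>, some choice
  makes all diagonals edges, and replacing the \<open>k - 1\<close> rows by the \<open>k\<close> diagonals
  enlarges \<open>M\<close>.\<close>

definition transversal :: "nat \<Rightarrow> (nat \<Rightarrow> 'a set) \<Rightarrow> 'a set \<Rightarrow> bool" where
  "transversal k V e \<longleftrightarrow> e \<subseteq> (\<Union>i<k. V i) \<and> (\<forall>i<k. card (e \<inter> V i) = 1)"

definition class_vertex :: "(nat \<Rightarrow> 'a set) \<Rightarrow> 'a set \<Rightarrow> nat \<Rightarrow> 'a" where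
  "class_vertex V e c = the_elem (e \<inter> V c)"

lemma transversal_Int_class:
  assumes "transversal k V e" "c < k"
  shows "e \<inter> V c = {class_vertex V e c}"
proof -
  obtain x where "e \<inter> V c = {x}"
    using assms unfolding transversal_def by (auto simp: card_1_singleton_iff)
  then show ?thesis unfolding class_vertex_def by simp
qed

lemma class_vertex_eq:
  "transversal k V e \<Longrightarrow> c < k \<Longrightarrow> x \<in> e \<Longrightarrow> x \<in> V c \<Longrightarrow> class_vertex V e c = x"
  by (metis IntI singletonD transversal_Int_class)

lemma class_vertex_mem:
  "transversal k V e \<Longrightarrow> c < k \<Longrightarrow> class_vertex V e c \<in> e \<and> class_vertex V e c \<in> V c"
  using transversal_Int_class by fastforce

lemma transversal_eq_image:
  assumes "transversal k V e"
  shows "e = class_vertex V e ` {..<k}"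
proof
  show "e \<subseteq> class_vertex V e ` {..<k}"
  proof
    fix x assume "x \<in> e"
    moreover obtain c where "c < k" "x \<in> V c"
      using assms \<open>x \<in> e\<close> unfolding transversal_def by blast
    ultimately show "x \<in> class_vertex V e ` {..<k}"
      using class_vertex_eq[OF assms] by (metis imageI lessThan_iff)
  qed
  show "class_vertex V e ` {..<k} \<subseteq> e"
    using class_vertex_mem[OF assms] by blast
qed

lemma image_Int_class:
  assumes "disjoint_family_on V {..<k}" and "\<And>c. c < k \<Longrightarrow> f c \<in> V c" and "c < k"
  shows "f ` {..<k} \<inter> V c = {f c}"
proof -
  have "c' = c" if "c' < k" "f c' \<in> V c" for c'
    using assms that unfolding disjoint_family_on_def by (metis disjoint_iff lessThan_iff)
  then show ?thesis using assms(2,3) by auto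
qed

lemma transversal_image:
  assumes "disjoint_family_on V {..<k}" and "\<And>c. c < k \<Longrightarrow> f c \<in> V c"
  shows "transversal k V (f ` {..<k})"
  using image_Int_class[OF assms] assms(2) unfolding transversal_def by auto

lemma card_transversals_le:
  assumes "\<And>c. c < k \<Longrightarrow> finite (W c)"
  shows "card {e. transversal k V e \<and> (\<forall>c<k. class_vertex V e c \<in> W c)} \<le> (\<Prod>c<k. card (W c))"
proof -
  let ?S = "{e. transversal k V e \<and> (\<forall>c<k. class_vertex V e c \<in> W c)}"
  have "inj_on (\<lambda>e. restrict (class_vertex V e) {..<k}) ?S"
  proof (rule inj_onI)
    fix e e' assume "e \<in> ?S" "e' \<in> ?S"
      and eq: "restrict (class_vertex V e) {..<k} = restrict (class_vertex V e') {..<k}"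
    then have "class_vertex V e ` {..<k} = class_vertex V e' ` {..<k}"
      by (metis restrict_apply' image_cong)
    moreover have "transversal k V e" "transversal k V e'"
      using \<open>e \<in> ?S\<close> \<open>e' \<in> ?S\<close> by simp_all
    ultimately show "e = e'"
      using transversal_eq_image by metis
  qed
  moreover have "(\<lambda>e. restrict (class_vertex V e) {..<k}) ` ?S \<subseteq> PiE {..<k} W"
    by force
  moreover have "finite (PiE {..<k} W)"
    using assms by (intro finite_PiE) simp_all
  ultimately have "card ?S \<le> card (PiE {..<k} W)"
    by (rule card_inj_on_le)
  then show ?thesis by (simp add: card_PiE)
qed

lemma prod_eq_power_except:
  assumes "finite A" "i \<in> A" "\<And>c. c \<in> A \<Longrightarrow> c \<noteq> i \<Longrightarrow> f c = m"
  shows "prod f A = f i * m ^ (card A - 1)"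
proof -
  have "prod f A = f i * prod f (A - {i})"
    using assms(1,2) by (simp add: prod.remove)
  also have "prod f (A - {i}) = m ^ (card A - 1)"
    using assms by (simp add: prod.cong[of _ _ f "\<lambda>_. m"] card_Diff_singleton)
  finally show ?thesis .
qed

definition cyclic_offset :: "nat \<Rightarrow> nat \<Rightarrow> nat \<Rightarrow> nat" where
  "cyclic_offset k j c = (c + k - j) mod k"

lemma cyclic_offset_lt: "0 < k \<Longrightarrow> cyclic_offset k j c < k"
  unfolding cyclic_offset_def by simp

lemma cyclic_offset_self: "j < k \<Longrightarrow> cyclic_offset k j j = 0"
  unfolding cyclic_offset_def by simp

lemma cyclic_offset_add: "j < k \<Longrightarrow> t < k \<Longrightarrow> cyclic_offset k j ((j + t) mod k) = t"
  unfolding cyclic_offset_def by (cases "j + t < k") (auto simp: mod_if)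

lemma cyclic_offset_inject:
  "j < k \<Longrightarrow> j' < k \<Longrightarrow> c < k \<Longrightarrow> cyclic_offset k j c = cyclic_offset k j' c \<Longrightarrow> j = j'"
  unfolding cyclic_offset_def by (auto simp: mod_if split: if_splits)

lemma falling_product_ge_power:
  fixes a :: real
  assumes "j \<le> m" "0 \<le> a" "a \<le> real (m - j + 1)"
  shows "a ^ j \<le> real (\<Prod>{m - j + 1..m})"
proof -
  have "a ^ j = (\<Prod>x\<in>{m - j + 1..m}. a)"
    using assms(1) by simp
  also have "\<dots> \<le> (\<Prod>x\<in>{m - j + 1..m}. real x)"
    using assms(2,3) by (intro prod_mono) auto
  also have "\<dots> = real (\<Prod>{m - j + 1..m})"
    by (simp add: of_nat_prod)
  finally show ?thesis .
qed

lemma matching_size_lower_bound: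
  fixes d :: real
  assumes "0 < n" "d \<le> 1 / 2"
    and "(1 - d) * real n ^ (k - 1) \<le> real (k - 1) * real m * real n ^ (k - 2)"
  shows "real n \<le> 2 * real k * real m"
proof (cases "k \<le> 1")
  case True
  then show ?thesis using assms by simp
next
  case False
  then have "real n ^ (k - 1) = real n * real n ^ (k - 2)"
    by (metis One_nat_def Suc_diff_Suc diff_Suc_1 not_le numeral_2_eq_2 power_Suc)
  then have "(1 - d) * real n \<le> real (k - 1) * real m"
    using assms(1,3) by (simp add: mult.assoc mult.commute mult.left_commute mult_le_cancel_left_pos)
  moreover have "d * real n \<le> real n / 2"
    using mult_right_mono[OF assms(2), of "real n"] by simp
  then have "real n / 2 \<le> (1 - d) * real n"
    by (simp add: algebra_simps)
  moreover have "real (k - 1) * real m \<le> real k * real m"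
    by (simp add: mult_right_mono)
  ultimately show ?thesis by linarith
qed

text \<open>Every factor of the falling factorial is at least \<open>a = n / (4k) \<ge> k\<close>, while the
  left-hand side equals \<open>a ^ (k - 1) / 4\<close>.\<close>
lemma falling_product_exceeds:
  assumes "2 \<le> k" "4 * k ^ 2 \<le> n" "real n \<le> 2 * real k * real m"
  shows "k - 1 \<le> m \<and> real k * (1 / (4 * real k) ^ k * real n ^ (k - 1)) < real (\<Prod>{m - (k - 1) + 1..m})"
proof -
  define a where "a = real n / (4 * real k)"
  have n: "4 * real k ^ 2 \<le> real n"
    using assms(2) by (metis of_nat_le_iff of_nat_mult of_nat_numeral of_nat_power)
  have power_k: "(4 * real k) ^ k = 4 * real k * (4 * real k) ^ (k - 1)"
    using assms(1) by (cases k) auto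
  have "real k \<le> a"
    using n assms(1) unfolding a_def by (simp add: field_simps power2_eq_square)
  have "real n \<le> 4 * real k * (real m - real k + 2)"
    using n assms(1,3) by (simp add: algebra_simps power2_eq_square)
  then have "a \<le> real m - real k + 2"
    using assms(1) unfolding a_def by (simp add: pos_divide_le_eq mult.commute)
  then have "k - 1 \<le> m" "a \<le> real (m - (k - 1) + 1)"
    using \<open>real k \<le> a\<close> assms(1) by (auto simp: of_nat_diff)
  then have "a ^ (k - 1) \<le> real (\<Prod>{m - (k - 1) + 1..m})"
    using falling_product_ge_power a_def by simp
  moreover have "real k * (1 / (4 * real k) ^ k * real n ^ (k - 1)) = a ^ (k - 1) / 4"
    using assms(1) unfolding a_def power_divide power_k by (simp add: field_simps)
  moreover have "0 < a ^ (k - 1)"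
    using \<open>real k \<le> a\<close> assms(1) by simp
  ultimately show ?thesis
    using \<open>k - 1 \<le> m\<close> by (intro conjI) linarith+
qed

definition matching :: "'a set set \<Rightarrow> 'a set set \<Rightarrow> bool" where
  "matching E M \<longleftrightarrow> M \<subseteq> E \<and> pairwise disjnt M"

lemma matching_edge_eq:
  "matching E M \<Longrightarrow> e \<in> M \<Longrightarrow> e' \<in> M \<Longrightarrow> x \<in> e \<Longrightarrow> x \<in> e' \<Longrightarrow> e = e'"
  unfolding matching_def pairwise_def disjnt_def by blast

locale dense_kpartite =
  fixes k :: nat and V :: "nat \<Rightarrow> 'a set" and E :: "'a set set" and n :: nat and d :: real
  assumes k_pos: "0 < k"
    and classes_disjoint: "disjoint_family_on V {..<k}"
    and edge_transversal: "\<And>e. e \<in> E \<Longrightarrow> transversal k V e"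
    and finite_class: "\<And>c. c < k \<Longrightarrow> finite (V c)"
    and card_class: "\<And>c. c < k \<Longrightarrow> card (V c) = n"
    and min_degree: "\<And>v. v \<in> (\<Union>c<k. V c) \<Longrightarrow> (1 - d) * real n ^ (k - 1) \<le> real (vdeg E v)"
begin

lemma finite_transversals: "finite {e. transversal k V e \<and> P e}"
proof (rule finite_subset)
  show "{e. transversal k V e \<and> P e} \<subseteq> Pow (\<Union>c<k. V c)"
    unfolding transversal_def by auto
  show "finite (Pow (\<Union>c<k. V c))"
    using finite_class by simp
qed

lemma finite_edges: "finite E"
proof (rule finite_subset)
  show "E \<subseteq> {e. transversal k V e \<and> True}"
    using edge_transversal by blast
qed (rule finite_transversals)

lemma finite_matching: "matching E M \<Longrightarrow> finite M"
  unfolding matching_def using finite_edges finite_subset by blast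

lemma card_transversals_through:
  assumes "j < k" "v \<in> V j"
  shows "card {e. transversal k V e \<and> v \<in> e} \<le> n ^ (k - 1)"
proof -
  define W where "W c = (if c = j then {v} else V c)" for c
  have "class_vertex V e c \<in> W c" if "transversal k V e" "v \<in> e" "c < k" for e c
    using that assms class_vertex_eq[OF that(1) \<open>j < k\<close> \<open>v \<in> e\<close>] class_vertex_mem[OF that(1,3)]
    unfolding W_def by auto
  then have "{e. transversal k V e \<and> v \<in> e} \<subseteq> {e. transversal k V e \<and> (\<forall>c<k. class_vertex V e c \<in> W c)}"
    by blast
  then have "card {e. transversal k V e \<and> v \<in> e} \<le> card {e. transversal k V e \<and> (\<forall>c<k. class_vertex V e c \<in> W c)}"
    by (rule card_mono[OF finite_transversals])
  also have "\<dots> \<le> (\<Prod>c<k. card (W c))"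
    by (rule card_transversals_le) (simp add: W_def finite_class)
  also have "\<dots> = n ^ (k - 1)"
    using assms by (subst prod_eq_power_except[of _ j _ n]) (auto simp: W_def card_class)
  finally show ?thesis .
qed

lemma card_non_edges_through:
  assumes "j < k" "v \<in> V j"
  shows "real (card ({e. transversal k V e \<and> v \<in> e} - E)) \<le> d * real n ^ (k - 1)"
proof -
  let ?T = "{e. transversal k V e \<and> v \<in> e}"
  have "?T \<inter> E = {e \<in> E. v \<in> e}"
    using edge_transversal by auto
  then have "card (?T - E) = card ?T - vdeg E v"
    unfolding vdeg_def by (metis card_Diff_subset_Int finite_edges finite_Int)
  moreover have "vdeg E v \<le> card ?T"
    unfolding vdeg_def using edge_transversal by (intro card_mono[OF finite_transversals]) auto
  ultimately have "real (card (?T - E)) = real (card ?T) - real (vdeg E v)"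
    by simp
  moreover have "real n ^ (k - 1) - d * real n ^ (k - 1) \<le> real (vdeg E v)"
    using assms min_degree[of v] by (auto simp: algebra_simps)
  moreover have "real (card ?T) \<le> real n ^ (k - 1)"
    using card_transversals_through[OF assms] by (metis of_nat_le_iff of_nat_power)
  ultimately show ?thesis
    by linarith
qed

lemma matching_transversal: "matching E M \<Longrightarrow> e \<in> M \<Longrightarrow> transversal k V e"
  unfolding matching_def using edge_transversal by blast

lemma card_matching_class:
  assumes "matching E M" "c < k"
  shows "card (\<Union>M \<inter> V c) = card M"
proof -
  have "\<Union>M \<inter> V c = (\<lambda>e. class_vertex V e c) ` M"
  proof
    show "\<Union>M \<inter> V c \<subseteq> (\<lambda>e. class_vertex V e c) ` M"
    proof
      fix x assume "x \<in> \<Union>M \<inter> V c"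
      then obtain e where "e \<in> M" "x \<in> e" "x \<in> V c" by blast
      then show "x \<in> (\<lambda>e. class_vertex V e c) ` M"
        using class_vertex_eq[OF matching_transversal[OF assms(1)] assms(2)] by (metis imageI)
    qed
    show "(\<lambda>e. class_vertex V e c) ` M \<subseteq> \<Union>M \<inter> V c"
      using class_vertex_mem[OF matching_transversal[OF assms(1)] assms(2)] by blast
  qed
  moreover have "inj_on (\<lambda>e. class_vertex V e c) M"
  proof (rule inj_onI)
    fix e e' assume "e \<in> M" "e' \<in> M" "class_vertex V e c = class_vertex V e' c"
    then show "e = e'"
      using class_vertex_mem[OF matching_transversal[OF assms(1)] assms(2)]
        matching_edge_eq[OF assms(1)] by metis
  qed
  ultimately show ?thesis by (simp add: card_image)
qed

end

locale unsaturated = dense_kpartite +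
  fixes M :: "'a set set" and u :: "nat \<Rightarrow> 'a"
  assumes matching: "matching E M"
    and free_in_class: "\<And>c. c < k \<Longrightarrow> u c \<in> V c"
    and free_uncovered: "\<And>c. c < k \<Longrightarrow> u c \<notin> \<Union>M"
begin

lemma matching_insert:
  assumes "e \<in> E" "e \<inter> \<Union>M = {}" "u 0 \<in> e"
  shows "matching E (insert e M) \<and> card (insert e M) = Suc (card M)"
proof -
  have "e \<notin> M"
    using assms(3) free_uncovered[OF k_pos] by blast
  moreover have "matching E (insert e M)"
    using matching assms(1,2) unfolding matching_def pairwise_insert disjnt_def by blast
  ultimately show ?thesis
    using finite_matching[OF matching] by simp
qed

lemma card_transversals_at_free_vertex_covered_in_class:
  assumes "c \<in> {1..<k}"
  shows "card {e. transversal k V e \<and> u 0 \<in> e \<and> class_vertex V e c \<in> \<Union>M} \<le> card M * n ^ (k - 2)"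
proof -
  define W where "W c' = (if c' = 0 then {u 0} else if c' = c then \<Union>M \<inter> V c else V c')" for c'
  have "\<forall>c'<k. class_vertex V e c' \<in> W c'"
    if e: "transversal k V e" "u 0 \<in> e" "class_vertex V e c \<in> \<Union>M" for e
  proof -
    have "class_vertex V e 0 = u 0"
      using class_vertex_eq[OF e(1) k_pos e(2) free_in_class[OF k_pos]] .
    then show ?thesis
      using e class_vertex_mem[OF e(1)] unfolding W_def by auto
  qed
  then have "{e. transversal k V e \<and> u 0 \<in> e \<and> class_vertex V e c \<in> \<Union>M}
      \<subseteq> {e. transversal k V e \<and> (\<forall>c'<k. class_vertex V e c' \<in> W c')}"
    by blast
  then have "card {e. transversal k V e \<and> u 0 \<in> e \<and> class_vertex V e c \<in> \<Union>M}
      \<le> card {e. transversal k V e \<and> (\<forall>c'<k. class_vertex V e c' \<in> W c')}"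
    by (rule card_mono[OF finite_transversals])
  also have "\<dots> \<le> (\<Prod>c'<k. card (W c'))"
    by (rule card_transversals_le) (simp add: W_def finite_class)
  also have "\<dots> = card (W 0) * (\<Prod>c'\<in>{..<k} - {0}. card (W c'))"
    using k_pos by (simp add: prod.remove)
  also have "(\<Prod>c'\<in>{..<k} - {0}. card (W c')) = card (W c) * n ^ (k - 2)"
    using assms by (subst prod_eq_power_except[of _ c _ n]) (auto simp: W_def card_class numeral_2_eq_2)
  finally show ?thesis
    using assms card_matching_class[OF matching] by (simp add: W_def)
qed

lemma card_transversals_at_free_vertex_covered:
  "card {e. transversal k V e \<and> u 0 \<in> e \<and> e \<inter> \<Union>M \<noteq> {}} \<le> (k - 1) * card M * n ^ (k - 2)"
proof -
  let ?H = "\<lambda>c. {e. transversal k V e \<and> u 0 \<in> e \<and> class_vertex V e c \<in> \<Union>M}"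
  have "{e. transversal k V e \<and> u 0 \<in> e \<and> e \<inter> \<Union>M \<noteq> {}} \<subseteq> (\<Union>c\<in>{1..<k}. ?H c)"
  proof
    fix e assume "e \<in> {e. transversal k V e \<and> u 0 \<in> e \<and> e \<inter> \<Union>M \<noteq> {}}"
    then obtain x where e: "transversal k V e" "u 0 \<in> e" and x: "x \<in> e" "x \<in> \<Union>M"
      by blast
    then obtain c where c: "c < k" "x \<in> V c"
      unfolding transversal_def by blast
    have "c \<noteq> 0"
      using x c free_in_class free_uncovered class_vertex_eq[OF e(1)] e(2) by metis
    moreover have "class_vertex V e c = x"
      using class_vertex_eq[OF e(1) c(1) x(1) c(2)] .
    ultimately show "e \<in> (\<Union>c\<in>{1..<k}. ?H c)"
      using e x c by auto
  qed
  then have "card {e. transversal k V e \<and> u 0 \<in> e \<and> e \<inter> \<Union>M \<noteq> {}} \<le> card (\<Union>c\<in>{1..<k}. ?H c)"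
    by (intro card_mono) (auto intro: finite_transversals)
  also have "\<dots> \<le> (\<Sum>c\<in>{1..<k}. card (?H c))"
    by (rule card_UN_le) simp
  also have "\<dots> \<le> (\<Sum>c\<in>{1..<k}. card M * n ^ (k - 2))"
    by (rule sum_mono) (rule card_transversals_at_free_vertex_covered_in_class)
  finally show ?thesis
    by (simp add: mult.assoc)
qed

lemma augment_by_free_edge:
  assumes "real (k - 1) * real (card M) * real n ^ (k - 2) < (1 - d) * real n ^ (k - 1)"
  shows "\<exists>M'. matching E M' \<and> card M < card M'"
proof -
  have "\<exists>e\<in>E. u 0 \<in> e \<and> e \<inter> \<Union>M = {}"
  proof (rule ccontr)
    assume "\<not> ?thesis"
    then have "{e \<in> E. u 0 \<in> e} \<subseteq> {e. transversal k V e \<and> u 0 \<in> e \<and> e \<inter> \<Union>M \<noteq> {}}"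
      using edge_transversal by blast
    then have "card {e \<in> E. u 0 \<in> e} \<le> card {e. transversal k V e \<and> u 0 \<in> e \<and> e \<inter> \<Union>M \<noteq> {}}"
      by (rule card_mono[OF finite_transversals])
    then have "vdeg E (u 0) \<le> (k - 1) * card M * n ^ (k - 2)"
      unfolding vdeg_def using card_transversals_at_free_vertex_covered by linarith
    then have "real (vdeg E (u 0)) \<le> real (k - 1) * real (card M) * real n ^ (k - 2)"
      by (metis of_nat_le_iff of_nat_power of_nat_mult)
    moreover have "(1 - d) * real n ^ (k - 1) \<le> real (vdeg E (u 0))"
      using min_degree free_in_class k_pos by blast
    ultimately show False
      using assms by linarith
  qed
  then show ?thesis
    using matching_insert by (metis lessI)
qed

definition edge_lists :: "'a set list set" where
  "edge_lists = {xs. length xs = k - 1 \<and> distinct xs \<and> set xs \<subseteq> M}"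

definition entry :: "'a set list \<Rightarrow> nat \<Rightarrow> nat \<Rightarrow> 'a" where
  "entry xs t c = (if t = 0 then u c else class_vertex V (xs ! (t - 1)) c)"

definition diagonal :: "'a set list \<Rightarrow> nat \<Rightarrow> 'a set" where
  "diagonal xs j = (\<lambda>c. entry xs (cyclic_offset k j c) c) ` {..<k}"

lemma edge_lists_nth:
  "xs \<in> edge_lists \<Longrightarrow> 0 < t \<Longrightarrow> t < k \<Longrightarrow> xs ! (t - 1) \<in> M \<and> xs ! (t - 1) \<in> set xs"
  unfolding edge_lists_def by auto

lemma entry_in_row:
  assumes "xs \<in> edge_lists" "0 < t" "t < k" "c < k"
  shows "entry xs t c \<in> xs ! (t - 1)"
  using assms class_vertex_mem[OF matching_transversal[OF matching] \<open>c < k\<close>] edge_lists_nth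
  unfolding entry_def by simp

lemma entry_in_class:
  assumes "xs \<in> edge_lists" "t < k" "c < k"
  shows "entry xs t c \<in> V c"
  using assms class_vertex_mem[OF matching_transversal[OF matching] \<open>c < k\<close>] edge_lists_nth free_in_class
  unfolding entry_def by auto

lemma entry_inject:
  assumes xs: "xs \<in> edge_lists" and "t < k" "t' < k" "c < k" and eq: "entry xs t c = entry xs t' c"
  shows "t = t'"
proof -
  have covered: "entry xs s c \<in> xs ! (s - 1) \<and> xs ! (s - 1) \<in> M" if "0 < s" "s < k" for s
    using entry_in_row[OF xs that \<open>c < k\<close>] edge_lists_nth[OF xs that] by blast
  have "t = 0 \<longleftrightarrow> t' = 0"
    using covered eq free_uncovered[OF \<open>c < k\<close>] \<open>t < k\<close> \<open>t' < k\<close>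
    unfolding entry_def by (metis UnionI gr0I)
  moreover have "t = t'" if "0 < t" "0 < t'"
  proof -
    have "xs ! (t - 1) = xs ! (t' - 1)"
      using covered[OF that(1) \<open>t < k\<close>] covered[OF that(2) \<open>t' < k\<close>] eq
        matching_edge_eq[OF matching] by metis
    then have "t - 1 = t' - 1"
      using xs \<open>t < k\<close> \<open>t' < k\<close> that unfolding edge_lists_def by (simp add: nth_eq_iff_index_eq)
    then show ?thesis using that by simp
  qed
  ultimately show ?thesis by blast
qed

lemma entry_cyclic_offset_in_class:
  "xs \<in> edge_lists \<Longrightarrow> c < k \<Longrightarrow> entry xs (cyclic_offset k j c) c \<in> V c"
  using entry_in_class cyclic_offset_lt[OF k_pos] by blast

lemma diagonal_transversal:
  assumes "xs \<in> edge_lists"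
  shows "transversal k V (diagonal xs j)"
  unfolding diagonal_def
  by (rule transversal_image[OF classes_disjoint entry_cyclic_offset_in_class[OF assms]])

lemma diagonal_Int_class:
  assumes "xs \<in> edge_lists" "c < k"
  shows "diagonal xs j \<inter> V c = {entry xs (cyclic_offset k j c) c}"
  unfolding diagonal_def
  by (rule image_Int_class[OF classes_disjoint entry_cyclic_offset_in_class[OF assms(1)] assms(2)])

lemma free_in_diagonal: "j < k \<Longrightarrow> u j \<in> diagonal xs j"
  unfolding diagonal_def entry_def using cyclic_offset_self by force

lemma diagonals_disjoint:
  assumes xs: "xs \<in> edge_lists" and "j < k" "j' < k" "j \<noteq> j'"
  shows "diagonal xs j \<inter> diagonal xs j' = {}"
proof (rule ccontr)
  assume "diagonal xs j \<inter> diagonal xs j' \<noteq> {}"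
  then obtain x c where "c < k" "x \<in> diagonal xs j \<inter> V c" "x \<in> diagonal xs j' \<inter> V c"
    using diagonal_transversal[OF xs] unfolding transversal_def by blast
  then have "entry xs (cyclic_offset k j c) c = entry xs (cyclic_offset k j' c) c"
    using diagonal_Int_class[OF xs \<open>c < k\<close>, of j] diagonal_Int_class[OF xs \<open>c < k\<close>, of j']
    by auto
  then have "cyclic_offset k j c = cyclic_offset k j' c"
    using entry_inject[OF xs] cyclic_offset_lt[OF k_pos] \<open>c < k\<close> by blast
  then show False
    using cyclic_offset_inject assms \<open>c < k\<close> by blast
qed

lemma diagonal_disjoint_matching:
  assumes xs: "xs \<in> edge_lists" and "e \<in> M - set xs"
  shows "diagonal xs j \<inter> e = {}"
proof (rule ccontr)
  assume "diagonal xs j \<inter> e \<noteq> {}"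
  then obtain c where c: "c < k" and x: "entry xs (cyclic_offset k j c) c \<in> e"
    unfolding diagonal_def by blast
  let ?t = "cyclic_offset k j c"
  show False
  proof (cases "?t = 0")
    case True
    then show ?thesis
      using x assms free_uncovered[OF c] unfolding entry_def by auto
  next
    case False
    then have "0 < ?t" "?t < k"
      using cyclic_offset_lt[OF k_pos] by auto
    then have "xs ! (?t - 1) = e"
      using matching_edge_eq[OF matching] edge_lists_nth[OF xs] entry_in_row[OF xs _ _ c] x assms(2)
      by (meson DiffD1)
    then show ?thesis
      using edge_lists_nth[OF xs \<open>0 < ?t\<close> \<open>?t < k\<close>] assms(2) by auto
  qed
qed

lemma diagonal_inj_on:
  assumes "j < k"
  shows "inj_on (\<lambda>xs. diagonal xs j) edge_lists"
proof (rule inj_onI)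
  fix xs ys assume xs: "xs \<in> edge_lists" and ys: "ys \<in> edge_lists" and eq: "diagonal xs j = diagonal ys j"
  show "xs = ys"
  proof (rule nth_equalityI)
    show "length xs = length ys"
      using xs ys unfolding edge_lists_def by simp
    fix i assume "i < length xs"
    then have t: "0 < Suc i" "Suc i < k"
      using xs unfolding edge_lists_def by auto
    define c where "c = (j + Suc i) mod k"
    have c: "c < k" "cyclic_offset k j c = Suc i"
      unfolding c_def using k_pos cyclic_offset_add[OF assms t(2)] by auto
    then have "entry xs (Suc i) c = entry ys (Suc i) c"
      using eq diagonal_Int_class[OF xs c(1), of j] diagonal_Int_class[OF ys c(1), of j] by simp
    then have "entry xs (Suc i) c \<in> xs ! i" "entry xs (Suc i) c \<in> ys ! i"
      using entry_in_row[OF xs t c(1)] entry_in_row[OF ys t c(1)] by simp_all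
    moreover have "xs ! i \<in> M" "ys ! i \<in> M"
      using edge_lists_nth[OF xs t] edge_lists_nth[OF ys t] by simp_all
    ultimately show "xs ! i = ys ! i"
      using matching_edge_eq[OF matching] by blast
  qed
qed

lemma card_bad_edge_lists:
  assumes "j < k"
  shows "real (card {xs \<in> edge_lists. diagonal xs j \<notin> E}) \<le> d * real n ^ (k - 1)"
proof -
  have "card {xs \<in> edge_lists. diagonal xs j \<notin> E} \<le> card ({e. transversal k V e \<and> u j \<in> e} - E)"
  proof (rule card_inj_on_le)
    show "inj_on (\<lambda>xs. diagonal xs j) {xs \<in> edge_lists. diagonal xs j \<notin> E}"
      using diagonal_inj_on[OF assms] by (rule inj_on_subset) blast
    show "(\<lambda>xs. diagonal xs j) ` {xs \<in> edge_lists. diagonal xs j \<notin> E} \<subseteq> {e. transversal k V e \<and> u j \<in> e} - E"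
      using diagonal_transversal free_in_diagonal[OF assms] by blast
    show "finite ({e. transversal k V e \<and> u j \<in> e} - E)"
      using finite_transversals by blast
  qed
  then have "real (card {xs \<in> edge_lists. diagonal xs j \<notin> E}) \<le> real (card ({e. transversal k V e \<and> u j \<in> e} - E))"
    by simp
  also have "\<dots> \<le> d * real n ^ (k - 1)"
    by (rule card_non_edges_through[OF assms free_in_class[OF assms]])
  finally show ?thesis .
qed

lemma matching_exchange:
  assumes xs: "xs \<in> edge_lists" and edges: "\<And>j. j < k \<Longrightarrow> diagonal xs j \<in> E"
  shows "matching E ((M - set xs) \<union> diagonal xs ` {..<k})"
proof -
  have "pairwise disjnt (M - set xs)"
    using matching unfolding matching_def by (meson Diff_subset pairwise_subset)
  moreover have "pairwise disjnt (diagonal xs ` {..<k})"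
    using diagonals_disjoint[OF xs] unfolding disjnt_def by (intro pairwise_imageI) blast
  moreover have "disjnt e e' \<and> disjnt e' e" if "e \<in> M - set xs" "e' \<in> diagonal xs ` {..<k}" for e e'
    using diagonal_disjoint_matching[OF xs that(1)] that(2) unfolding disjnt_def by blast
  ultimately have "pairwise disjnt ((M - set xs) \<union> diagonal xs ` {..<k})"
    unfolding pairwise_def by (metis Un_iff)
  then show ?thesis
    using matching edges unfolding matching_def by blast
qed

lemma card_exchange:
  assumes xs: "xs \<in> edge_lists"
  shows "card ((M - set xs) \<union> diagonal xs ` {..<k}) = Suc (card M)"
proof -
  have "set xs \<subseteq> M" "card (set xs) = k - 1"
    using xs unfolding edge_lists_def by (auto simp: distinct_card)
  then have "card (M - set xs) = card M - (k - 1)" "k - 1 \<le> card M"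
    using finite_matching[OF matching] card_Diff_subset card_mono finite_subset by metis+
  moreover have "inj_on (diagonal xs) {..<k}"
    using diagonals_disjoint[OF xs] free_in_diagonal by (intro inj_onI) blast
  moreover have "(M - set xs) \<inter> diagonal xs ` {..<k} = {}"
  proof (rule equals0I)
    fix e assume "e \<in> (M - set xs) \<inter> diagonal xs ` {..<k}"
    then obtain j where j: "j < k" and "diagonal xs j \<in> M"
      by blast
    then show False
      using free_in_diagonal[OF j, of xs] free_uncovered[OF j] by (meson UnionI)
  qed
  ultimately show ?thesis
    using finite_matching[OF matching] k_pos by (simp add: card_Un_disjoint card_image)
qed

lemma augment_by_diagonals:
  assumes "k - 1 \<le> card M"
    and "real k * (d * real n ^ (k - 1)) < real (\<Prod>{card M - (k - 1) + 1 .. card M})"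
  shows "\<exists>M'. matching E M' \<and> card M < card M'"
proof -
  let ?Bad = "\<Union>j<k. {xs \<in> edge_lists. diagonal xs j \<notin> E}"
  have "card edge_lists = \<Prod>{card M - (k - 1) + 1 .. card M}"
    unfolding edge_lists_def using card_lists_distinct_length_eq finite_matching[OF matching] assms(1) .
  moreover have "real (card ?Bad) \<le> real k * (d * real n ^ (k - 1))"
  proof -
    have "card ?Bad \<le> (\<Sum>j<k. card {xs \<in> edge_lists. diagonal xs j \<notin> E})"
      by (rule card_UN_le) simp
    then have "real (card ?Bad) \<le> real (\<Sum>j<k. card {xs \<in> edge_lists. diagonal xs j \<notin> E})"
      by (rule of_nat_mono)
    also have "\<dots> = (\<Sum>j<k. real (card {xs \<in> edge_lists. diagonal xs j \<notin> E}))"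
      by (rule of_nat_sum)
    also have "\<dots> \<le> (\<Sum>j<k. d * real n ^ (k - 1))"
      using card_bad_edge_lists by (intro sum_mono) simp
    finally show ?thesis by simp
  qed
  ultimately have "card ?Bad < card edge_lists"
    using assms(2) by linarith
  moreover have "?Bad \<subseteq> edge_lists"
    by blast
  ultimately have "\<not> edge_lists \<subseteq> ?Bad"
    using subset_antisym by fastforce
  then obtain xs where "xs \<in> edge_lists" "\<And>j. j < k \<Longrightarrow> diagonal xs j \<in> E"
    by blast
  then show ?thesis
    using matching_exchange card_exchange by (metis lessI)
qed

end

context dense_kpartite
begin

lemma ex_maximum_matching: "\<exists>M. matching E M \<and> (\<forall>M'. matching E M' \<longrightarrow> card M' \<le> card M)"
proof (rule ex_has_greatest_nat[of "matching E" "{}" card "Suc (card E)"])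
  show "matching E {}"
    unfolding matching_def by simp
  show "\<forall>M. matching E M \<longrightarrow> card M < Suc (card E)"
    using finite_edges unfolding matching_def by (auto simp: less_Suc_eq_le intro: card_mono)
qed

lemma free_vertices_exist:
  assumes "matching E M" "\<not> (\<Union>c<k. V c) \<subseteq> \<Union>M"
  obtains u where "\<And>c. c < k \<Longrightarrow> u c \<in> V c" "\<And>c. c < k \<Longrightarrow> u c \<notin> \<Union>M"
proof -
  obtain c0 where c0: "c0 < k" "\<not> V c0 \<subseteq> \<Union>M"
    using assms(2) by blast
  then have "card (\<Union>M \<inter> V c0) < card (V c0)"
    using finite_class by (intro psubset_card_mono) auto
  then have "card M < n"
    using card_matching_class[OF assms(1) c0(1)] card_class[OF c0(1)] by simp
  have "\<exists>x. x \<in> V c \<and> x \<notin> \<Union>M" if "c < k" for c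
  proof (rule ccontr)
    assume "\<not> ?thesis"
    then have "V c \<subseteq> \<Union>M \<inter> V c"
      by blast
    moreover have "finite (\<Union>M \<inter> V c)"
      using finite_class[OF that] by simp
    ultimately have "card (V c) \<le> card (\<Union>M \<inter> V c)"
      by (rule card_mono[rotated])
    then have "n \<le> card M"
      using card_matching_class[OF assms(1) that] card_class[OF that] by simp
    then show False
      using \<open>card M < n\<close> by simp
  qed
  then show ?thesis
    using that by metis
qed

lemma augmenting_matching:
  assumes "matching E M" "\<not> (\<Union>c<k. V c) \<subseteq> \<Union>M"
    and d: "d = 1 / (4 * real k) ^ k" and "4 * k ^ 2 \<le> n"
  shows "\<exists>M'. matching E M' \<and> card M < card M'"
proof -
  obtain u where "\<And>c. c < k \<Longrightarrow> u c \<in> V c" "\<And>c. c < k \<Longrightarrow> u c \<notin> \<Union>M"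
    using free_vertices_exist[OF assms(1,2)] by blast
  then interpret unsaturated k V E n d M u
    using assms(1) by unfold_locales
  show ?thesis
  proof (cases "real (k - 1) * real (card M) * real n ^ (k - 2) < (1 - d) * real n ^ (k - 1)")
    case True
    then show ?thesis by (rule augment_by_free_edge)
  next
    case False
    then have "2 \<le> k"
      using k_pos d by (cases "k = 1") auto
    have "(4 * real k) ^ 1 \<le> (4 * real k) ^ k"
      using k_pos by (intro power_increasing) auto
    then have "d \<le> 1 / 2"
      unfolding d using \<open>2 \<le> k\<close> by (intro divide_left_mono) auto
    moreover have "0 < n"
      using assms(4) k_pos by (metis gr0I le_zero_eq mult_is_0 power_not_zero zero_neq_numeral)
    ultimately have "real n \<le> 2 * real k * real (card M)"
      using False by (intro matching_size_lower_bound) auto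
    then show ?thesis
      using augment_by_diagonals falling_product_exceeds[OF \<open>2 \<le> k\<close> assms(4)] d
      by (simp add: mult.assoc)
  qed
qed

lemma perfect_matching_exists:
  assumes "d = 1 / (4 * real k) ^ k" "4 * k ^ 2 \<le> n"
  shows "\<exists>M. perfect_matching (\<Union>c<k. V c) E M"
proof -
  obtain M where M: "matching E M" and maximum: "\<And>M'. matching E M' \<Longrightarrow> card M' \<le> card M"
    using ex_maximum_matching by blast
  have "(\<Union>c<k. V c) \<subseteq> \<Union>M"
    using augmenting_matching[OF M _ assms] maximum leD by blast
  moreover have "\<Union>M \<subseteq> (\<Union>c<k. V c)"
    using M edge_transversal unfolding matching_def transversal_def by blast
  ultimately show ?thesis
    using M unfolding perfect_matching_def matching_def pairwise_def disjnt_def by blast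
qed

end

lemma kpartite_kgraph_iff:
  "kpartite_kgraph k V E \<longleftrightarrow> disjoint_family_on V {..<k} \<and> (\<forall>e\<in>E. transversal k V e)"
  unfolding kpartite_kgraph_def disjoint_family_on_def transversal_def by blast

theorem lemma8p18:
  shows "\<forall>k::nat. k > 0 \<longrightarrow> (\<exists>d::real. d > 0 \<and> (\<exists>n0::nat. \<forall>n\<ge>n0.
     \<forall>(V :: nat \<Rightarrow> nat set) (E :: nat set set).
       kpartite_kgraph k V E \<and> (\<forall>i<k. finite (V i) \<and> card (V i) = n) \<and>
       (\<forall>v\<in>(\<Union>i<k. V i). real (vdeg E v) \<ge> (1 - d) * real n ^ (k - 1))
       \<longrightarrow> (\<exists>M. perfect_matching (\<Union>i<k. V i) E M)))"
proof (intro allI impI)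
  fix k :: nat assume "k > 0"
  let ?d = "1 / (4 * real k) ^ k"
  have "\<exists>M. perfect_matching (\<Union>i<k. V i) E M"
    if "4 * k ^ 2 \<le> n" and "kpartite_kgraph k V E" and "\<forall>i<k. finite (V i) \<and> card (V i) = n"
      and "\<forall>v\<in>(\<Union>i<k. V i). real (vdeg E v) \<ge> (1 - ?d) * real n ^ (k - 1)"
    for n and V :: "nat \<Rightarrow> nat set" and E
  proof -
    interpret dense_kpartite k V E n ?d
      using \<open>k > 0\<close> that(2-4) unfolding kpartite_kgraph_iff by unfold_locales auto
    show ?thesis
      using perfect_matching_exists[OF refl that(1)] .
  qed
  then show "\<exists>d::real. d > 0 \<and> (\<exists>n0::nat. \<forall>n\<ge>n0.
     \<forall>(V :: nat \<Rightarrow> nat set) (E :: nat set set).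
       kpartite_kgraph k V E \<and> (\<forall>i<k. finite (V i) \<and> card (V i) = n) \<and>
       (\<forall>v\<in>(\<Union>i<k. V i). real (vdeg E v) \<ge> (1 - d) * real n ^ (k - 1))
       \<longrightarrow> (\<exists>M. perfect_matching (\<Union>i<k. V i) E M))"
    using \<open>k > 0\<close> by (intro exI[of _ ?d] conjI exI[of _ "4 * k ^ 2"]) auto
qed

end
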